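(* For every $\varepsilon>0$, with $\mathcal D_\varepsilon$ the value defined in the context, $\mathrm{ALG}\le\frac{2+\varepsilon}{\varepsilon}\,\mathcal D_\varepsilon$.
   Context: Network. $S,T,R,D$ are pairwise disjoint finite sets (sources, transmitters, receivers, destinations). Each transmitter $t\in T$ is attached to a source $s(t)\in S$ via a link of integer delay $d(s(t),t)\ge 0$; each receiver $r\in R$ is attached to a destination $d(r)\in D$ via a link of integer delay $d(r,d(r))\ge 0$. A set $E_R\subseteq T\times R$ of reconfigurable edges is given, each $e\in E_R$ with integer delay $d(e)\ge 1$. A set $E_\ell\subseteq S\times D$ of fixed links is given, each with integer delay $\ge0$. Two edges of $E_R$ are adjacent if they share a transmitter or a receiver (an edge is adjacent to itself). Packets. $\Pi$ is a finite set of unit-size packets; packet $p$ has weight $w_p>0$, release time $r_p\in\mathbb Z_{\ge1}$, source $s_p$, destination $d_p$. Let $E(p)=\{(t,r)\in E_R: s(t)=s_p,\ d(r)=d_p\}$; assume $E(p)\neq\emptyset$ for all $p$. $\Pi_\ell$ is the set of packets with $(s_p,d_p)\in E_\ell$, and $\ell_p:=d(s_p,d_p)$ for them. Fix a total order $\prec$ on $\Pi$ with $r_p<r_q\Rightarrow p\prec q$. Algorithm ALG. Packets are processed in the order $\prec$; $p$ is processed at time $r_p$, before transmission step $r_p$. A packet assigned to a reconfigurable edge $e$ is split into $d(e)$ chunks of weight $w_p/d(e)$ assigned to $e$; $p(c)$, $w_c$, $e(c)$ denote the packet, weight and edge of chunk $c$. A chunk is pending until transmitted; $W(C)$ is the total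 weight of a set $C$ of chunks. When $p$ is processed, $B(p)$ is the set of pending chunks of packets $p'\prec p$; for $e=(t,r)\in E(p)$, $\mathrm{Adj}(p,e)$ = chunks of $B(p)$ whose edge is adjacent to $e$, $H(p,e)=\{c\in\mathrm{Adj}(p,e):w_c\ge w_p/d(e)\}$, $L(p,e)=\mathrm{Adj}(p,e)\setminus H(p,e)$, and $\mathrm{imp}(p,e)=w_p(d(s_p,t)+\frac{d(e)+1}{2}+d(r,d_p))+w_p|H(p,e)|+d(e)W(L(p,e))$. With $e^*\in\arg\min_{e\in E(p)}\mathrm{imp}(p,e)$: if $p\in\Pi_\ell$ and $w_p\ell_p\le\mathrm{imp}(p,e^* )$, $p$ is sent over its fixed link (latency $w_p\ell_p$); otherwise $p$ is assigned to $e(p):=e^*$ and split into chunks. Scheduler: at each integer $\tau\ge1$, build $M_\tau$ greedily over pending chunks in order of decreasing weight (ties by $\prec$ on packets, then arbitrary), adding $c$ iff no chunk already in $M_\tau$ has an edge adjacent to $e(c)$; chunks of $M_\tau$ are transmitted at step $\tau$. If chunk $c$ of $p$ is transmitted at step $\tau_c$ via $e(p)=(t,r)$, its completion time is $f_c=\tau_c+1+d(s_p,t)+d(r,d_p)$, and $c$ is active at integer times $\tau$ with $r_p\le\tau<f_c$. The cost is $\mathrm{ALG}=\sum_{p\text{ sent on fixed link}}w_p\ell_p+\sum_{\text{chunks }c}w_c(f_c-r_{p(c)})$. Dual assignment: $\alpha_p=w_p\ell_p$ if $p$ is sent over its fixed link, and $\alpha_p=\mathrm{imp}(p,e(p))$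 (computed when $p$ is processed) otherwise; for $t\in T$ and integer $\tau\ge1$, $\beta_{t,\tau}$ is the total weight of chunks active at $\tau$ whose edge has transmitter $t$, and $\beta_{r,\tau}$ ($r\in R$) likewise with receiver $r$. For $\varepsilon>0$ define $$\mathcal D_\varepsilon=\sum_{p\in\Pi}\alpha_p-\frac{1}{2+\varepsilon}\Big(\sum_{t\in T}\sum_{\tau\ge1}\beta_{t,\tau}+\sum_{r\in R}\sum_{\tau\ge1}\beta_{r,\tau}\Big).$$ *)

theory Defs
  imports "HOL-Analysis.Analysis"
begin

text \<open>Sources, transmitters, receivers and destinations live in four separate
types (hence are pairwise disjoint).  All delays are natural numbers (integers >= 0).\<close>

record ('s, 't, 'r, 'd) network =
  nS   :: "'s set"
  nT   :: "'t set"
  nR   :: "'r set"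
  nD   :: "'d set"
  src  :: "'t \<Rightarrow> 's"
  dst  :: "'r \<Rightarrow> 'd"
  dST  :: "'t \<Rightarrow> nat"             (* d(s(t),t) *)
  dRD  :: "'r \<Rightarrow> nat"             (* d(r,d(r)) *)
  ER   :: "('t \<times> 'r) set"          (* reconfigurable edges *)
  dE   :: "'t \<times> 'r \<Rightarrow> nat"
  El   :: "('s \<times> 'd) set"          (* fixed links *)
  dl   :: "'s \<times> 'd \<Rightarrow> nat"

definition wf_network :: "('s, 't, 'r, 'd) network \<Rightarrow> bool" where
  "wf_network N \<longleftrightarrow>
     finite (nS N) \<and> finite (nT N) \<and> finite (nR N) \<and> finite (nD N) \<and>
     (\<forall>t\<in>nT N. src N t \<in> nS N) \<and> (\<forall>r\<in>nR N. dst N r \<in> nD N) \<and>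
     ER N \<subseteq> nT N \<times> nR N \<and> (\<forall>e\<in>ER N. dE N e \<ge> 1) \<and>
     El N \<subseteq> nS N \<times> nD N"

record ('s, 'd, 'p) packets =
  Pi   :: "'p set"
  wt   :: "'p \<Rightarrow> real"
  rel  :: "'p \<Rightarrow> nat"
  sp   :: "'p \<Rightarrow> 's"
  dp   :: "'p \<Rightarrow> 'd"
  prec :: "('p \<times> 'p) set"          (* strict total order \<prec>; (p,q) \<in> prec means p \<prec> q *)

definition Epk :: "('s, 't, 'r, 'd) network \<Rightarrow> ('s, 'd, 'p) packets \<Rightarrow> 'p \<Rightarrow> ('t \<times> 'r) set" where
  "Epk N K p = {(t, r) \<in> ER N. src N t = sp K p \<and> dst N r = dp K p}"

definition wf_packets :: "('s, 't, 'r, 'd) network \<Rightarrow> ('s, 'd, 'p) packets \<Rightarrow> bool" where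
  "wf_packets N K \<longleftrightarrow>
     finite (Pi K) \<and>
     (\<forall>p\<in>Pi K. wt K p > 0 \<and> rel K p \<ge> 1 \<and> sp K p \<in> nS N \<and> dp K p \<in> nD N \<and> Epk N K p \<noteq> {}) \<and>
     strict_linear_order_on (Pi K) (prec K) \<and>
     (\<forall>p\<in>Pi K. \<forall>q\<in>Pi K. rel K p < rel K q \<longrightarrow> (p, q) \<in> prec K)"

definition Pl :: "('s, 't, 'r, 'd) network \<Rightarrow> ('s, 'd, 'p) packets \<Rightarrow> 'p set" where
  "Pl N K = {p \<in> Pi K. (sp K p, dp K p) \<in> El N}"

definition lat :: "('s, 't, 'r, 'd) network \<Rightarrow> ('s, 'd, 'p) packets \<Rightarrow> 'p \<Rightarrow> nat" where
  "lat N K p = dl N (sp K p, dp K p)"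

definition adjacent :: "'t \<times> 'r \<Rightarrow> 't \<times> 'r \<Rightarrow> bool" where
  "adjacent e e' \<longleftrightarrow> fst e = fst e' \<or> snd e = snd e'"

text \<open>A run is described by asg (None = sent over its fixed link,
Some e = assigned to reconfigurable edge e) and tx, the transmission step of each
chunk.  Chunk i (i < d(e)) of packet p is the pair (p,i).\<close>

type_synonym ('t, 'r, 'p) assignment = "'p \<Rightarrow> ('t \<times> 'r) option"

definition chunks :: "('s, 't, 'r, 'd) network \<Rightarrow> ('s, 'd, 'p) packets \<Rightarrow> ('t, 'r, 'p) assignment \<Rightarrow> ('p \<times> nat) set" where
  "chunks N K asg = {(p, i). p \<in> Pi K \<and> asg p \<noteq> None \<and> i < dE N (the (asg p))}"

definition cedge :: "('t, 'r, 'p) assignment \<Rightarrow> 'p \<times> nat \<Rightarrow> 't \<times> 'r" where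
  "cedge asg c = the (asg (fst c))"

definition cweight :: "('s, 't, 'r, 'd) network \<Rightarrow> ('s, 'd, 'p) packets \<Rightarrow> ('t, 'r, 'p) assignment \<Rightarrow> 'p \<times> nat \<Rightarrow> real" where
  "cweight N K asg c = wt K (fst c) / real (dE N (cedge asg c))"

text \<open>B(p): chunks of packets p' \<prec> p still pending when p is processed (before step r_p).\<close>
definition Bset where
  "Bset N K asg (tx :: 'p \<times> nat \<Rightarrow> nat) p =
     {c \<in> chunks N K asg. (fst c, p) \<in> prec K \<and> rel K p \<le> tx c}"

definition AdjS where
  "AdjS N K asg tx p e = {c \<in> Bset N K asg tx p. adjacent (cedge asg c) e}"

definition HS where
  "HS N K asg tx p e = {c \<in> AdjS N K asg tx p e. cweight N K asg c \<ge> wt K p / real (dE N e)}"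

definition LS where
  "LS N K asg tx p e = AdjS N K asg tx p e - HS N K asg tx p e"

definition imp :: "('s, 't, 'r, 'd) network \<Rightarrow> ('s, 'd, 'p) packets \<Rightarrow> ('t, 'r, 'p) assignment
                    \<Rightarrow> ('p \<times> nat \<Rightarrow> nat) \<Rightarrow> 'p \<Rightarrow> 't \<times> 'r \<Rightarrow> real" where
  "imp N K asg tx p e =
     wt K p * (real (dST N (fst e)) + (real (dE N e) + 1) / 2 + real (dRD N (snd e)))
     + wt K p * real (card (HS N K asg tx p e))
     + real (dE N e) * (\<Sum>c\<in>LS N K asg tx p e. cweight N K asg c)"

definition valid_decisions where
  "valid_decisions N K asg tx \<longleftrightarrow>
     (\<forall>p\<in>Pi K. \<exists>e. is_arg_min (imp N K asg tx p) (\<lambda>e. e \<in> Epk N K p) e \<and>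
        (if p \<in> Pl N K \<and> wt K p * real (lat N K p) \<le> imp N K asg tx p e
         then asg p = None else asg p = Some e))"

definition greedy :: "('t, 'r, 'p) assignment \<Rightarrow> ('p \<times> nat) list \<Rightarrow> ('p \<times> nat) set" where
  "greedy asg L = foldl (\<lambda>M c. if \<exists>c'\<in>M. adjacent (cedge asg c') (cedge asg c) then M else insert c M) {} L"

definition chunk_before where
  "chunk_before N K asg c c' \<longleftrightarrow>
     cweight N K asg c > cweight N K asg c' \<or>
     (cweight N K asg c = cweight N K asg c' \<and> ((fst c, fst c') \<in> prec K \<or> fst c = fst c'))"

definition pending where
  "pending N K asg (tx :: 'p \<times> nat \<Rightarrow> nat) \<tau> = {c \<in> chunks N K asg. rel K (fst c) \<le> \<tau> \<and> \<tau> \<le> tx c}"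

definition valid_schedule where
  "valid_schedule N K asg tx \<longleftrightarrow>
     (\<forall>c\<in>chunks N K asg. rel K (fst c) \<le> tx c) \<and>
     (\<forall>\<tau>::nat. \<tau> \<ge> 1 \<longrightarrow> (\<exists>L. distinct L \<and> set L = pending N K asg tx \<tau> \<and>
         sorted_wrt (chunk_before N K asg) L \<and>
         {c \<in> chunks N K asg. tx c = \<tau>} = greedy asg L))"

definition valid_run where
  "valid_run N K asg tx \<longleftrightarrow> valid_decisions N K asg tx \<and> valid_schedule N K asg tx"

definition completion where
  "completion N asg (tx :: 'p \<times> nat \<Rightarrow> nat) c =
     tx c + 1 + dST N (fst (cedge asg c)) + dRD N (snd (cedge asg c))"

definition ALG where
  "ALG N K asg tx =
     (\<Sum>p\<in>{p \<in> Pi K. asg p = None}. wt K p * real (lat N K p)) +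
     (\<Sum>c\<in>chunks N K asg. cweight N K asg c * (real (completion N asg tx c) - real (rel K (fst c))))"

definition alpha where
  "alpha N K asg tx p =
     (case asg p of None \<Rightarrow> wt K p * real (lat N K p) | Some e \<Rightarrow> imp N K asg tx p e)"

definition active where
  "active N K asg tx c (\<tau>::nat) \<longleftrightarrow> rel K (fst c) \<le> \<tau> \<and> \<tau> < completion N asg tx c"

definition betaT where
  "betaT N K asg tx t \<tau> =
     (\<Sum>c\<in>{c \<in> chunks N K asg. active N K asg tx c \<tau> \<and> fst (cedge asg c) = t}. cweight N K asg c)"

definition betaR where
  "betaR N K asg tx r \<tau> =
     (\<Sum>c\<in>{c \<in> chunks N K asg. active N K asg tx c \<tau> \<and> snd (cedge asg c) = r}. cweight N K asg c)"

definition Dual where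
  "Dual N K asg tx (\<epsilon>::real) =
     (\<Sum>p\<in>Pi K. alpha N K asg tx p)
     - 1 / (2 + \<epsilon>) * ((\<Sum>t\<in>nT N. infsum (betaT N K asg tx t) {1..})
                       + (\<Sum>r\<in>nR N. infsum (betaR N K asg tx r) {1..}))"

end

theory Submission
  imports Defs
begin

text \<open>Every step that a chunk c of packet p spends waiting, the greedy matching transmits an
  adjacent chunk that precedes c in the scheduling order.  Such a blocker is an earlier chunk
  of p itself, a chunk that was already pending when p arrived and is at least as heavy as c
  (so it lies in H(p, e(p))), or a chunk of a later packet q for which c was counted in
  L(q, e(q)).  Charging each waiting step to its blocker, which is determined by the step,
  bounds the total waiting cost by the (d-1)/2, H and L terms of the dual values, and hence
  ALG is at most the sum of the alpha's.  Both the transmitter and the receiver beta's add up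
  to the reconfigurable part C of ALG, so the dual value is the sum of the alpha's minus
  2C/(2+eps), and the bound follows since the fixed-link part of ALG is nonnegative.\<close>

lemma adjacent_sym: "adjacent e e' = adjacent e' e"
  by (auto simp: adjacent_def)

lemma adjacent_refl: "adjacent e e"
  by (simp add: adjacent_def)

abbreviation greedy_step :: "('t, 'r, 'p) assignment \<Rightarrow> ('p \<times> nat) set \<Rightarrow> 'p \<times> nat \<Rightarrow> ('p \<times> nat) set" where
  "greedy_step asg \<equiv> \<lambda>M c. if \<exists>c'\<in>M. adjacent (cedge asg c') (cedge asg c) then M else insert c M"

lemma foldl_greedy_step_mono: "M \<subseteq> foldl (greedy_step asg) M L"
proof (induction L arbitrary: M)
  case (Cons a L)
  have "M \<subseteq> greedy_step asg M a" by auto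
  then show ?case using Cons.IH[of "greedy_step asg M a"] by simp
qed simp

lemma foldl_greedy_step_independent:
  "(\<forall>x\<in>M. \<forall>y\<in>M. x \<noteq> y \<longrightarrow> \<not> adjacent (cedge asg x) (cedge asg y)) \<Longrightarrow>
   x \<in> foldl (greedy_step asg) M L \<Longrightarrow> y \<in> foldl (greedy_step asg) M L \<Longrightarrow> x \<noteq> y \<Longrightarrow>
   \<not> adjacent (cedge asg x) (cedge asg y)"
proof (induction L arbitrary: M)
  case Nil then show ?case by auto
next
  case (Cons a L)
  show ?case
  proof (rule Cons.IH[of "greedy_step asg M a"])
    show "\<forall>x\<in>greedy_step asg M a. \<forall>y\<in>greedy_step asg M a.
        x \<noteq> y \<longrightarrow> \<not> adjacent (cedge asg x) (cedge asg y)"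
      using Cons.prems(1) by (auto simp: adjacent_sym)
  qed (use Cons.prems in auto)
qed

lemma foldl_greedy_step_blocked:
  "c \<in> set L \<Longrightarrow> c \<notin> foldl (greedy_step asg) M L \<Longrightarrow> c \<notin> M \<Longrightarrow>
   \<exists>xs ys c'. L = xs @ c # ys \<and> c' \<in> M \<union> set xs \<and> c' \<in> foldl (greedy_step asg) M L
     \<and> adjacent (cedge asg c') (cedge asg c)"
proof (induction L arbitrary: M)
  case Nil then show ?case by auto
next
  case (Cons a L)
  show ?case
  proof (cases "a = c")
    case True
    have "greedy_step asg M c \<subseteq> foldl (greedy_step asg) M (a # L)"
      using foldl_greedy_step_mono[of "greedy_step asg M c" asg L] True by simp
    with Cons.prems True have "\<exists>c'\<in>M. adjacent (cedge asg c') (cedge asg c)"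
      by (auto split: if_splits)
    then obtain c' where "c' \<in> M" "adjacent (cedge asg c') (cedge asg c)" by blast
    moreover have "a # L = [] @ c # L" using True by simp
    moreover have "c' \<in> foldl (greedy_step asg) M (a # L)"
      using foldl_greedy_step_mono[of M asg "a # L"] \<open>c' \<in> M\<close> by blast
    ultimately show ?thesis by blast
  next
    case False
    have "c \<in> set L" using Cons.prems False by auto
    moreover have "c \<notin> foldl (greedy_step asg) (greedy_step asg M a) L" using Cons.prems by simp
    moreover have "c \<notin> greedy_step asg M a" using Cons.prems False by auto
    ultimately obtain xs ys c' where h: "L = xs @ c # ys" "c' \<in> greedy_step asg M a \<union> set xs"
      "c' \<in> foldl (greedy_step asg) (greedy_step asg M a) L" "adjacent (cedge asg c') (cedge asg c)"
      using Cons.IH by blast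
    have "c' \<in> M \<union> set (a # xs)" using h(2) by (auto split: if_splits)
    then show ?thesis
      using h by (intro exI[of _ "a # xs"] exI[of _ ys] exI[of _ c']) auto
  qed
qed

lemma greedy_independent:
  "x \<in> greedy asg L \<Longrightarrow> y \<in> greedy asg L \<Longrightarrow> x \<noteq> y \<Longrightarrow> \<not> adjacent (cedge asg x) (cedge asg y)"
  unfolding greedy_def using foldl_greedy_step_independent[of "{}" asg] by blast

lemma greedy_blocked:
  "c \<in> set L \<Longrightarrow> c \<notin> greedy asg L \<Longrightarrow>
   \<exists>xs ys c'. L = xs @ c # ys \<and> c' \<in> set xs \<and> c' \<in> greedy asg L \<and> adjacent (cedge asg c') (cedge asg c)"
  unfolding greedy_def using foldl_greedy_step_blocked[of c L asg "{}"] by auto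

lemma sum_card_less_inj_on:
  fixes f :: "'a \<Rightarrow> 'b::linorder"
  assumes "finite A" "inj_on f A"
  shows "2 * (\<Sum>i\<in>A. card {j\<in>A. f j < f i}) = card A * (card A - 1)"
proof -
  have split: "card {j\<in>A. f j < f i} + card {j\<in>A. f i < f j} = card A - 1" if i: "i \<in> A" for i
  proof -
    have "{j\<in>A. f j < f i} \<union> {j\<in>A. f i < f j} = A - {i}"
    proof (intro equalityI subsetI)
      fix j assume j: "j \<in> A - {i}"
      then have "f j \<noteq> f i"
        using inj_onD[OF assms(2) _ _ i] by blast
      with j show "j \<in> {j\<in>A. f j < f i} \<union> {j\<in>A. f i < f j}"
        by (auto simp: neq_iff)
    qed auto
    moreover have "card ({j\<in>A. f j < f i} \<union> {j\<in>A. f i < f j}) = card {j\<in>A. f j < f i} + card {j\<in>A. f i < f j}"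
      by (rule card_Un_disjoint) (use assms(1) in auto)
    ultimately show ?thesis
      using assms(1) i by simp
  qed
  have "(\<Sum>i\<in>A. card {j\<in>A. f i < f j}) = (\<Sum>i\<in>A. \<Sum>j\<in>A. of_bool (f i < f j))"
    using assms(1) by (simp add: Int_def)
  also have "\<dots> = (\<Sum>j\<in>A. \<Sum>i\<in>A. of_bool (f i < f j))"
    by (rule sum.swap)
  also have "\<dots> = (\<Sum>i\<in>A. card {j\<in>A. f j < f i})"
    using assms(1) by (simp add: Int_def)
  finally have "2 * (\<Sum>i\<in>A. card {j\<in>A. f j < f i})
      = (\<Sum>i\<in>A. card {j\<in>A. f j < f i} + card {j\<in>A. f i < f j})"
    by (simp add: sum.distrib)
  also have "\<dots> = card A * (card A - 1)"
    using split by simp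
  finally show ?thesis .
qed

lemma sum_mult_card_incidence:
  fixes w :: "'a \<Rightarrow> real"
  assumes "finite C" "\<And>c'. c' \<in> C \<Longrightarrow> S c' \<subseteq> C"
  shows "(\<Sum>c\<in>C. w c * card {c'\<in>C. c \<in> S c'}) = (\<Sum>c'\<in>C. \<Sum>c\<in>S c'. w c)"
proof -
  have "(\<Sum>c\<in>C. w c * card {c'\<in>C. c \<in> S c'}) = (\<Sum>c\<in>C. \<Sum>c'\<in>C. if c \<in> S c' then w c else 0)"
    using assms(1) by (simp add: sum.If_cases Int_def mult.commute)
  also have "\<dots> = (\<Sum>c'\<in>C. \<Sum>c\<in>C. if c \<in> S c' then w c else 0)"
    by (rule sum.swap)
  also have "\<dots> = (\<Sum>c'\<in>C. \<Sum>c\<in>S c'. w c)"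
    using assms by (simp add: sum.If_cases Int_absorb1 Int_commute)
  finally show ?thesis .
qed

lemma infsum_active_weight:
  fixes w :: "'c \<Rightarrow> real" and r f :: "'c \<Rightarrow> nat"
  assumes "finite C" and "\<And>c. c \<in> C \<Longrightarrow> 1 \<le> r c \<and> r c \<le> f c"
  shows "infsum (\<lambda>\<tau>. \<Sum>c\<in>{c\<in>C. r c \<le> \<tau> \<and> \<tau> < f c}. w c) {1..}
         = (\<Sum>c\<in>C. w c * (real (f c) - real (r c)))"
proof -
  define M where "M = Suc (\<Sum>c\<in>C. f c)"
  have f_less: "f c < M" if "c \<in> C" for c
    using member_le_sum[of c C f] assms(1) that unfolding M_def by simp
  have "infsum (\<lambda>\<tau>. \<Sum>c\<in>{c\<in>C. r c \<le> \<tau> \<and> \<tau> < f c}. w c) {1..}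
      = (\<Sum>\<tau>\<in>{1..<M}. \<Sum>c\<in>{c\<in>C. r c \<le> \<tau> \<and> \<tau> < f c}. w c)"
    using f_less
    by (subst infsum_cong_neutral[where T = "{1..<M}"
          and g = "\<lambda>\<tau>. \<Sum>c\<in>{c\<in>C. r c \<le> \<tau> \<and> \<tau> < f c}. w c"])
      (force intro!: sum.neutral)+
  also have "\<dots> = (\<Sum>\<tau>\<in>{1..<M}. \<Sum>c\<in>C. if r c \<le> \<tau> \<and> \<tau> < f c then w c else 0)"
    using assms(1) by (simp add: sum.inter_filter)
  also have "\<dots> = (\<Sum>c\<in>C. \<Sum>\<tau>\<in>{1..<M}. if r c \<le> \<tau> \<and> \<tau> < f c then w c else 0)"
    by (rule sum.swap)
  also have "\<dots> = (\<Sum>c\<in>C. w c * (real (f c) - real (r c)))"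
  proof (rule sum.cong)
    fix c assume c: "c \<in> C"
    then have "{\<tau>\<in>{1..<M}. r c \<le> \<tau> \<and> \<tau> < f c} = {r c..<f c}"
      using assms(2)[OF c] f_less[OF c] by auto
    then show "(\<Sum>\<tau>\<in>{1..<M}. if r c \<le> \<tau> \<and> \<tau> < f c then w c else 0) = w c * (real (f c) - real (r c))"
      using assms(2)[OF c] by (simp add: sum.inter_filter[symmetric] of_nat_diff mult.commute)
  qed simp
  finally show ?thesis .
qed

lemma primal_dual_bound:
  fixes F C X \<epsilon> :: real
  assumes "0 \<le> F" "F + C \<le> X" "0 < \<epsilon>"
  shows "F + C \<le> (2 + \<epsilon>) / \<epsilon> * (X - 1 / (2 + \<epsilon>) * (C + C))"
proof -
  have "(2 + \<epsilon>) * (X - 1 / (2 + \<epsilon>) * (C + C)) = (2 + \<epsilon>) * X - 2 * C"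
    using assms(3) by (simp add: right_diff_distrib)
  then have "(2 + \<epsilon>) / \<epsilon> * (X - 1 / (2 + \<epsilon>) * (C + C)) = ((2 + \<epsilon>) * X - 2 * C) / \<epsilon>"
    by (metis times_divide_eq_left)
  moreover have "\<epsilon> * (F + C) \<le> (2 + \<epsilon>) * X - 2 * C"
    using assms mult_left_mono[OF assms(2), of "2 + \<epsilon>"] by (simp add: algebra_simps)
  ultimately show ?thesis
    using assms(3) by (simp add: pos_le_divide_eq mult.commute)
qed

text \<open>Splitting (d+1)/2 as (d-1)/2 + 1 separates the share of alpha that pays for waiting
  from the share that pays for transmission and propagation.\<close>
lemma imp_split:
  "imp N K asg tx p e
   = wt K p * (real (dE N e) - 1) / 2 + wt K p * real (card (HS N K asg tx p e))
     + real (dE N e) * (\<Sum>c\<in>LS N K asg tx p e. cweight N K asg c)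
     + wt K p * (1 + real (dST N (fst e)) + real (dRD N (snd e)))"
  by (simp add: imp_def field_simps)

locale alg_run =
  fixes N :: "('s, 't, 'r, 'd) network" and K :: "('s, 'd, 'p) packets"
    and asg :: "('t, 'r, 'p) assignment" and tx :: "'p \<times> nat \<Rightarrow> nat"
  assumes network: "wf_network N" and packets: "wf_packets N K" and run: "valid_run N K asg tx"
begin

abbreviation edge :: "'p \<Rightarrow> 't \<times> 'r" where
  "edge p \<equiv> the (asg p)"

abbreviation len :: "'p \<Rightarrow> nat" where
  "len p \<equiv> dE N (edge p)"

abbreviation w :: "'p \<times> nat \<Rightarrow> real" where
  "w \<equiv> cweight N K asg"

definition assigned :: "'p set" where
  "assigned = {p \<in> Pi K. asg p \<noteq> None}"

definition fixed_cost :: real where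
  "fixed_cost = (\<Sum>p\<in>{p \<in> Pi K. asg p = None}. wt K p * real (lat N K p))"

definition chunk_cost :: real where
  "chunk_cost = (\<Sum>c\<in>chunks N K asg. w c * (real (completion N asg tx c) - real (rel K (fst c))))"

definition siblings_before :: "'p \<times> nat \<Rightarrow> ('p \<times> nat) set" where
  "siblings_before c = {c' \<in> chunks N K asg. fst c' = fst c \<and> tx c' < tx c}"

definition L_owners :: "'p \<times> nat \<Rightarrow> ('p \<times> nat) set" where
  "L_owners c = {c' \<in> chunks N K asg. c \<in> LS N K asg tx (fst c') (edge (fst c'))}"

lemma ALG_eq: "ALG N K asg tx = fixed_cost + chunk_cost"
  by (simp add: ALG_def fixed_cost_def chunk_cost_def)

lemma finite_packets: "finite (Pi K)"
  using packets by (simp add: wf_packets_def)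

lemma weight_pos: "p \<in> Pi K \<Longrightarrow> 0 < wt K p"
  using packets by (simp add: wf_packets_def)

lemma release_pos: "p \<in> Pi K \<Longrightarrow> 1 \<le> rel K p"
  using packets by (simp add: wf_packets_def)

lemma fixed_cost_nonneg: "0 \<le> fixed_cost"
  unfolding fixed_cost_def
proof (intro sum_nonneg mult_nonneg_nonneg)
  show "0 \<le> wt K p" if "p \<in> {p \<in> Pi K. asg p = None}" for p
    using weight_pos that by (simp add: less_imp_le)
qed simp

lemma chunks_eq_Sigma: "chunks N K asg = Sigma assigned (\<lambda>p. {..<len p})"
  by (auto simp: chunks_def assigned_def)

lemma finite_assigned: "finite assigned"
  using finite_packets by (simp add: assigned_def)

lemma finite_chunks: "finite (chunks N K asg)"
  using finite_assigned by (simp add: chunks_eq_Sigma)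

lemma chunk_packet: "c \<in> chunks N K asg \<Longrightarrow> fst c \<in> assigned"
  by (auto simp: chunks_eq_Sigma)

lemma assigned_packet: "p \<in> assigned \<Longrightarrow> p \<in> Pi K"
  by (simp add: assigned_def)

lemma edge_in_Epk:
  assumes "p \<in> assigned"
  shows "edge p \<in> Epk N K p"
proof -
  from run assms obtain e where "is_arg_min (imp N K asg tx p) (\<lambda>e. e \<in> Epk N K p) e"
      "if p \<in> Pl N K \<and> wt K p * real (lat N K p) \<le> imp N K asg tx p e
       then asg p = None else asg p = Some e"
    unfolding valid_run_def valid_decisions_def assigned_def by blast
  with assms show ?thesis
    by (auto simp: assigned_def is_arg_min_def split: if_splits)
qed

lemma edge_in_ER: "p \<in> assigned \<Longrightarrow> edge p \<in> ER N"
  using edge_in_Epk[of p] by (cases "edge p") (simp add: Epk_def)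

lemma len_pos: "p \<in> assigned \<Longrightarrow> 1 \<le> len p"
  using edge_in_ER network by (simp add: wf_network_def)

lemma cweight_eq: "w c = wt K (fst c) / real (len (fst c))"
  by (simp add: cweight_def cedge_def)

lemma cweight_nonneg:
  assumes "c \<in> chunks N K asg"
  shows "0 \<le> w c"
proof -
  have "0 < wt K (fst c)"
    using weight_pos[OF assigned_packet[OF chunk_packet[OF assms]]] .
  then show ?thesis
    by (simp add: cweight_eq)
qed

lemma sum_chunks: "(\<Sum>c\<in>chunks N K asg. g c) = (\<Sum>p\<in>assigned. \<Sum>i<len p. g (p, i))"
  unfolding chunks_eq_Sigma using finite_assigned by (simp add: sum.Sigma)

lemma sum_chunks_cweight:
  "(\<Sum>c\<in>chunks N K asg. w c * h (fst c)) = (\<Sum>p\<in>assigned. wt K p * h p)"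
  unfolding sum_chunks
proof (rule sum.cong)
  fix p assume "p \<in> assigned"
  then have "len p \<noteq> 0"
    using len_pos by fastforce
  then show "(\<Sum>i<len p. w (p, i) * h (fst (p, i))) = wt K p * h p"
    by (simp add: cweight_eq)
qed simp

lemma release_le_tx: "c \<in> chunks N K asg \<Longrightarrow> rel K (fst c) \<le> tx c"
  using run by (simp add: valid_run_def valid_schedule_def)

lemma schedule_at:
  assumes "1 \<le> \<tau>"
  obtains L where "set L = pending N K asg tx \<tau>" "sorted_wrt (chunk_before N K asg) L"
    "{c \<in> chunks N K asg. tx c = \<tau>} = greedy asg L"
  using run assms unfolding valid_run_def valid_schedule_def by blast

lemma waiting_chunk_blocked:
  assumes "c \<in> chunks N K asg" "rel K (fst c) \<le> \<tau>" "\<tau> < tx c"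
  shows "\<exists>c'\<in>chunks N K asg. tx c' = \<tau> \<and> adjacent (cedge asg c') (cedge asg c)
           \<and> chunk_before N K asg c' c"
proof -
  have "1 \<le> \<tau>"
    using release_pos[OF assigned_packet[OF chunk_packet[OF assms(1)]]] assms(2) by (rule order_trans)
  then obtain L where L: "set L = pending N K asg tx \<tau>" "sorted_wrt (chunk_before N K asg) L"
    "{c \<in> chunks N K asg. tx c = \<tau>} = greedy asg L"
    by (rule schedule_at)
  have "c \<in> set L" "c \<notin> greedy asg L"
    using L(1,3) assms by (auto simp: pending_def)
  then obtain xs ys c' where split: "L = xs @ c # ys" and c': "c' \<in> set xs" "c' \<in> greedy asg L"
    and adj: "adjacent (cedge asg c') (cedge asg c)"
    by (metis greedy_blocked)
  have "sorted_wrt (chunk_before N K asg) (xs @ c # ys)"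
    using L(2) split by simp
  then have "chunk_before N K asg c' c"
    using c'(1) by (simp add: sorted_wrt_append)
  moreover have "c' \<in> {c \<in> chunks N K asg. tx c = \<tau>}"
    using L(3) c'(2) by simp
  ultimately show ?thesis
    using adj by auto
qed

lemma tx_inj_on_packet:
  assumes "p \<in> assigned"
  shows "inj_on (\<lambda>i. tx (p, i)) {..<len p}"
proof (rule inj_onI, rule ccontr)
  fix i j assume ij: "i \<in> {..<len p}" "j \<in> {..<len p}" "tx (p, i) = tx (p, j)" "i \<noteq> j"
  have chunks: "(p, i) \<in> chunks N K asg" "(p, j) \<in> chunks N K asg"
    using assms ij by (auto simp: chunks_eq_Sigma)
  have "1 \<le> tx (p, i)"
    using release_pos[OF assigned_packet[OF assms]] release_le_tx[OF chunks(1)] by simp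
  then obtain L where "{c \<in> chunks N K asg. tx c = tx (p, i)} = greedy asg L"
    by (rule schedule_at)
  with chunks ij have "\<not> adjacent (cedge asg (p, i)) (cedge asg (p, j))"
    by (intro greedy_independent) auto
  then show False
    by (simp add: cedge_def adjacent_refl)
qed

lemma HS_subset_chunks: "HS N K asg tx p e \<subseteq> chunks N K asg"
  by (auto simp: HS_def AdjS_def Bset_def)

lemma LS_subset_chunks: "LS N K asg tx p e \<subseteq> chunks N K asg"
  by (auto simp: LS_def HS_def AdjS_def Bset_def)

lemma prec_strict_linear: "trans (prec K)" "irrefl (prec K)" "total_on (Pi K) (prec K)"
  using packets by (simp_all add: wf_packets_def strict_linear_order_on_def)

lemma blocker_cases:
  assumes c: "c \<in> chunks N K asg" and c': "c' \<in> chunks N K asg"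
    and released: "rel K (fst c) \<le> tx c'" and earlier: "tx c' < tx c"
    and adj: "adjacent (cedge asg c') (cedge asg c)" and before: "chunk_before N K asg c' c"
  shows "c' \<in> siblings_before c \<or> c' \<in> HS N K asg tx (fst c) (edge (fst c)) \<or> c' \<in> L_owners c"
proof -
  obtain p q where pq: "fst c = p" "fst c' = q" by blast
  have "p \<in> Pi K" "q \<in> Pi K"
    using assigned_packet chunk_packet c c' pq by blast+
  then consider "q = p" | "(q, p) \<in> prec K" | "(p, q) \<in> prec K"
    using prec_strict_linear(3) unfolding total_on_def by blast
  then show ?thesis
  proof cases
    case 1
    then have "c' \<in> siblings_before c"
      using c' pq earlier by (simp add: siblings_before_def)
    then show ?thesis by blast
  next
    case 2
    then have "w c \<le> w c'"
      using before by (auto simp: chunk_before_def)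
    then have "wt K p / real (len p) \<le> w c'"
      using pq by (simp add: cweight_eq[of c])
    moreover have "c' \<in> Bset N K asg tx p"
      using c' 2 released pq by (simp add: Bset_def)
    moreover have "adjacent (cedge asg c') (edge p)"
      using adj pq by (simp add: cedge_def)
    ultimately have "c' \<in> HS N K asg tx p (edge p)"
      by (simp add: HS_def AdjS_def)
    then show ?thesis
      using pq by blast
  next
    case 3
    then have "(q, p) \<notin> prec K" "q \<noteq> p"
      using prec_strict_linear(1,2) unfolding trans_def irrefl_def by blast+
    then have "w c < w c'"
      using before pq by (auto simp: chunk_before_def)
    then have "\<not> wt K q / real (len q) \<le> w c"
      using pq by (simp add: cweight_eq[of c'])
    moreover have "c \<in> Bset N K asg tx q"
      using c 3 release_le_tx[OF c'] earlier pq by (simp add: Bset_def)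
    moreover have "adjacent (cedge asg c) (edge q)"
      using adj pq by (simp add: cedge_def adjacent_sym)
    ultimately have "c \<in> LS N K asg tx q (edge q)"
      by (simp add: LS_def HS_def AdjS_def)
    then have "c' \<in> L_owners c"
      using c' pq by (simp add: L_owners_def)
    then show ?thesis by blast
  qed
qed

lemma waiting_time_le:
  assumes c: "c \<in> chunks N K asg"
  shows "tx c - rel K (fst c)
         \<le> card (siblings_before c) + card (HS N K asg tx (fst c) (edge (fst c))) + card (L_owners c)"
proof -
  define wait where "wait = {rel K (fst c)..<tx c}"
  have "\<forall>\<tau>\<in>wait. \<exists>c'. c' \<in> chunks N K asg \<and> tx c' = \<tau> \<and> adjacent (cedge asg c') (cedge asg c)
          \<and> chunk_before N K asg c' c"
  proof
    fix \<tau> assume "\<tau> \<in> wait"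
    then have "rel K (fst c) \<le> \<tau>" "\<tau> < tx c"
      by (simp_all add: wait_def)
    from waiting_chunk_blocked[OF c this] show "\<exists>c'. c' \<in> chunks N K asg \<and> tx c' = \<tau> \<and> adjacent (cedge asg c') (cedge asg c)
          \<and> chunk_before N K asg c' c"
      by blast
  qed
  from bchoice[OF this] obtain b where b: "\<forall>\<tau>\<in>wait. b \<tau> \<in> chunks N K asg \<and> tx (b \<tau>) = \<tau>
      \<and> adjacent (cedge asg (b \<tau>)) (cedge asg c) \<and> chunk_before N K asg (b \<tau>) c"
    by blast
  have "inj_on b wait"
    using b by (intro inj_onI) metis
  moreover have "b ` wait \<subseteq> siblings_before c \<union> HS N K asg tx (fst c) (edge (fst c)) \<union> L_owners c"
  proof
    fix c' assume "c' \<in> b ` wait"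
    then obtain \<tau> where "\<tau> \<in> wait" "c' = b \<tau>"
      by blast
    with b blocker_cases[OF c, of c'] show "c' \<in> siblings_before c \<union> HS N K asg tx (fst c) (edge (fst c)) \<union> L_owners c"
      by (simp add: wait_def)
  qed
  moreover have "finite (siblings_before c \<union> HS N K asg tx (fst c) (edge (fst c)) \<union> L_owners c)"
    using finite_subset[OF HS_subset_chunks finite_chunks] finite_chunks
    by (simp add: siblings_before_def L_owners_def)
  ultimately have "card wait \<le> card (siblings_before c \<union> HS N K asg tx (fst c) (edge (fst c)) \<union> L_owners c)"
    by (rule card_inj_on_le)
  also have "\<dots> \<le> card (siblings_before c) + card (HS N K asg tx (fst c) (edge (fst c))) + card (L_owners c)"
    by (meson add_le_mono card_Un_le le_refl order_trans)
  finally show ?thesis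
    by (simp add: wait_def)
qed


lemma sum_siblings_before:
  "(\<Sum>c\<in>chunks N K asg. w c * card (siblings_before c)) = (\<Sum>p\<in>assigned. wt K p * (real (len p) - 1) / 2)"
  unfolding sum_chunks
proof (rule sum.cong)
  fix p assume p: "p \<in> assigned"
  define earlier where "earlier i = {j \<in> {..<len p}. tx (p, j) < tx (p, i)}" for i
  have card_eq: "card (siblings_before (p, i)) = card (earlier i)" for i
  proof -
    have "siblings_before (p, i) = Pair p ` earlier i"
      using p by (auto simp: siblings_before_def chunks_eq_Sigma earlier_def)
    then show ?thesis
      by (simp add: card_image inj_on_def)
  qed
  define S where "S = (\<Sum>i<len p. card (earlier i))"
  have "2 * S = len p * (len p - 1)"
    using sum_card_less_inj_on[OF finite_lessThan tx_inj_on_packet[OF p]] by (simp add: S_def earlier_def)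
  then have "real (2 * S) = real (len p * (len p - 1))"
    by (rule arg_cong)
  then have S: "real S = real (len p) * (real (len p) - 1) / 2"
    using len_pos[OF p] by (simp add: of_nat_diff)
  have "(\<Sum>i<len p. w (p, i) * card (siblings_before (p, i))) = wt K p / real (len p) * real S"
    by (simp add: S_def cweight_eq card_eq sum_distrib_left)
  also have "\<dots> = wt K p * (real (len p) - 1) / 2"
    using len_pos[OF p] by (simp add: S field_simps)
  finally show "(\<Sum>i<len p. w (p, i) * card (siblings_before (p, i))) = wt K p * (real (len p) - 1) / 2" .
qed simp

lemma sum_L_owners:
  "(\<Sum>c\<in>chunks N K asg. w c * card (L_owners c))
   = (\<Sum>p\<in>assigned. real (len p) * (\<Sum>c\<in>LS N K asg tx p (edge p). w c))"
proof -
  have "(\<Sum>c\<in>chunks N K asg. w c * card (L_owners c))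
      = (\<Sum>c'\<in>chunks N K asg. \<Sum>c\<in>LS N K asg tx (fst c') (edge (fst c')). w c)"
    unfolding L_owners_def by (rule sum_mult_card_incidence[OF finite_chunks LS_subset_chunks])
  also have "\<dots> = (\<Sum>p\<in>assigned. real (len p) * (\<Sum>c\<in>LS N K asg tx p (edge p). w c))"
    by (simp add: sum_chunks)
  finally show ?thesis .
qed

lemma chunk_cost_split:
  "chunk_cost = (\<Sum>c\<in>chunks N K asg. w c * real (tx c - rel K (fst c)))
     + (\<Sum>p\<in>assigned. wt K p * (1 + real (dST N (fst (edge p))) + real (dRD N (snd (edge p)))))"
proof -
  let ?delay = "\<lambda>p. 1 + real (dST N (fst (edge p))) + real (dRD N (snd (edge p)))"
  have "chunk_cost = (\<Sum>c\<in>chunks N K asg. w c * real (tx c - rel K (fst c)) + w c * ?delay (fst c))"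
    unfolding chunk_cost_def
  proof (rule sum.cong)
    fix c assume "c \<in> chunks N K asg"
    then have "real (completion N asg tx c) - real (rel K (fst c)) = real (tx c - rel K (fst c)) + ?delay (fst c)"
      using release_le_tx by (simp add: completion_def cedge_def of_nat_diff)
    then show "w c * (real (completion N asg tx c) - real (rel K (fst c)))
        = w c * real (tx c - rel K (fst c)) + w c * ?delay (fst c)"
      by (simp add: distrib_left)
  qed simp
  then show ?thesis
    by (simp add: sum.distrib sum_chunks_cweight[of ?delay])
qed

lemma sum_alpha: "(\<Sum>p\<in>Pi K. alpha N K asg tx p) = fixed_cost + (\<Sum>p\<in>assigned. imp N K asg tx p (edge p))"
proof -
  have "(\<Sum>p\<in>Pi K. alpha N K asg tx p)
      = (\<Sum>p\<in>Pi K. if asg p = None then wt K p * real (lat N K p) else imp N K asg tx p (edge p))"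
    by (rule sum.cong) (auto simp: alpha_def split: option.splits)
  also have "\<dots> = fixed_cost + (\<Sum>p\<in>assigned. imp N K asg tx p (edge p))"
    using finite_packets by (simp add: sum.If_cases fixed_cost_def assigned_def Int_def)
  finally show ?thesis .
qed

theorem ALG_le_sum_alpha: "ALG N K asg tx \<le> (\<Sum>p\<in>Pi K. alpha N K asg tx p)"
proof -
  let ?H = "\<lambda>p. HS N K asg tx p (edge p)"
  have "(\<Sum>c\<in>chunks N K asg. w c * real (tx c - rel K (fst c)))
      \<le> (\<Sum>c\<in>chunks N K asg. w c * real (card (siblings_before c) + card (?H (fst c)) + card (L_owners c)))"
  proof (intro sum_mono mult_left_mono)
    fix c assume c: "c \<in> chunks N K asg"
    show "real (tx c - rel K (fst c)) \<le> real (card (siblings_before c) + card (?H (fst c)) + card (L_owners c))"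
      using waiting_time_le[OF c] by (simp only: of_nat_le_iff)
    show "0 \<le> w c"
      using cweight_nonneg[OF c] .
  qed
  also have "\<dots> = (\<Sum>p\<in>assigned. wt K p * (real (len p) - 1) / 2 + wt K p * real (card (?H p))
      + real (len p) * (\<Sum>c\<in>LS N K asg tx p (edge p). w c))"
    by (simp add: distrib_left sum.distrib sum_siblings_before sum_L_owners
        sum_chunks_cweight[of "\<lambda>p. real (card (?H p))"])
  finally show ?thesis
    by (simp add: ALG_eq chunk_cost_split sum_alpha imp_split sum.distrib)
qed

lemma chunk_edge_endpoints:
  assumes "c \<in> chunks N K asg"
  shows "fst (cedge asg c) \<in> nT N" "snd (cedge asg c) \<in> nR N"
proof -
  have "edge (fst c) \<in> nT N \<times> nR N"
    using network edge_in_ER[OF chunk_packet[OF assms]] by (auto simp: wf_network_def)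
  then show "fst (cedge asg c) \<in> nT N" "snd (cedge asg c) \<in> nR N"
    by (auto simp: cedge_def mem_Times_iff)
qed

lemma sum_infsum_active_weight:
  assumes "finite T" "\<And>c. c \<in> chunks N K asg \<Longrightarrow> \<pi> c \<in> T"
  shows "(\<Sum>t\<in>T. infsum (\<lambda>\<tau>. \<Sum>c\<in>{c \<in> chunks N K asg. active N K asg tx c \<tau> \<and> \<pi> c = t}. w c) {1..})
         = chunk_cost"
proof -
  have "infsum (\<lambda>\<tau>. \<Sum>c\<in>{c \<in> chunks N K asg. active N K asg tx c \<tau> \<and> \<pi> c = t}. w c) {1..}
      = (\<Sum>c\<in>{c \<in> chunks N K asg. \<pi> c = t}. w c * (real (completion N asg tx c) - real (rel K (fst c))))"
    for t
  proof -
    have "{c \<in> chunks N K asg. active N K asg tx c \<tau> \<and> \<pi> c = t}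
        = {c \<in> {c \<in> chunks N K asg. \<pi> c = t}. rel K (fst c) \<le> \<tau> \<and> \<tau> < completion N asg tx c}" for \<tau>
      by (auto simp: active_def)
    moreover have "1 \<le> rel K (fst c) \<and> rel K (fst c) \<le> completion N asg tx c" if "c \<in> chunks N K asg" for c
      using release_pos[OF assigned_packet[OF chunk_packet[OF that]]] release_le_tx[OF that]
      by (simp add: completion_def)
    ultimately show ?thesis
      using infsum_active_weight[of "{c \<in> chunks N K asg. \<pi> c = t}" "\<lambda>c. rel K (fst c)" "completion N asg tx" w]
        finite_chunks by simp
  qed
  moreover have "\<pi> ` chunks N K asg \<subseteq> T"
    using assms(2) by blast
  ultimately show ?thesis
    by (simp add: chunk_cost_def sum.group[OF finite_chunks assms(1)])
qed

lemma sum_betaT: "(\<Sum>t\<in>nT N. infsum (betaT N K asg tx t) {1..}) = chunk_cost"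
  unfolding betaT_def[abs_def]
  using network chunk_edge_endpoints by (intro sum_infsum_active_weight) (simp_all add: wf_network_def)

lemma sum_betaR: "(\<Sum>r\<in>nR N. infsum (betaR N K asg tx r) {1..}) = chunk_cost"
  unfolding betaR_def[abs_def]
  using network chunk_edge_endpoints by (intro sum_infsum_active_weight) (simp_all add: wf_network_def)

end

theorem mainTheorem4:
  fixes N :: "('s, 't, 'r, 'd) network" and K :: "('s, 'd, 'p) packets"
    and asg :: "('t, 'r, 'p) assignment" and tx :: "'p \<times> nat \<Rightarrow> nat" and \<epsilon> :: real
  assumes "wf_network N" and "wf_packets N K" and "valid_run N K asg tx" and "\<epsilon> > 0"
  shows "ALG N K asg tx \<le> (2 + \<epsilon>) / \<epsilon> * Dual N K asg tx \<epsilon>"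
proof -
  interpret alg_run N K asg tx
    using assms(1-3) by unfold_locales
  have "Dual N K asg tx \<epsilon> = (\<Sum>p\<in>Pi K. alpha N K asg tx p) - 1 / (2 + \<epsilon>) * (chunk_cost + chunk_cost)"
    unfolding Dual_def sum_betaT sum_betaR by simp
  then show ?thesis
    using primal_dual_bound[OF fixed_cost_nonneg _ assms(4)] ALG_le_sum_alpha by (simp add: ALG_eq)
qed

end
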